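(* Let $G$ and $H$ be finite simple graphs. If $G$ or $H$ is a cover graph, then the direct product $G \times H$ is a cover graph.
   Context: A graph is a cover graph if it is the underlying (undirected) graph of the Hasse diagram of some finite partially ordered set. The direct product $G \times H$ has vertex set $V(G)\times V(H)$, with $(g_i,h_s)$ adjacent to $(g_j,h_t)$ if and only if $g_ig_j \in E(G)$ and $h_sh_t \in E(H)$. *)

theory Defs
  imports Main
begin

definition finite_simple_graph :: "'a set \<Rightarrow> ('a \<Rightarrow> 'a \<Rightarrow> bool) \<Rightarrow> bool" where
  "finite_simple_graph V E \<longleftrightarrow>
     finite V \<and> (\<forall>x y. E x y \<longrightarrow> x \<in> V \<and> y \<in> V) \<and>
     (\<forall>x y. E x y \<longrightarrow> E y x) \<and> (\<forall>x. \<not> E x x)"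

definition covers :: "'a set \<Rightarrow> 'a rel \<Rightarrow> 'a \<Rightarrow> 'a \<Rightarrow> bool" where
  "covers V r x y \<longleftrightarrow>
     (x, y) \<in> r \<and> x \<noteq> y \<and>
     \<not> (\<exists>z\<in>V. (x, z) \<in> r \<and> (z, y) \<in> r \<and> z \<noteq> x \<and> z \<noteq> y)"

definition cover_graph :: "'a set \<Rightarrow> ('a \<Rightarrow> 'a \<Rightarrow> bool) \<Rightarrow> bool" where
  "cover_graph V E \<longleftrightarrow>
     (\<exists>r. partial_order_on V r \<and>
          (\<forall>x\<in>V. \<forall>y\<in>V. E x y \<longleftrightarrow> (covers V r x y \<or> covers V r y x)))"

definition direct_prod_edges ::
  "('a \<Rightarrow> 'a \<Rightarrow> bool) \<Rightarrow> ('b \<Rightarrow> 'b \<Rightarrow> bool) \<Rightarrow> ('a \<times> 'b) \<Rightarrow> ('a \<times> 'b) \<Rightarrow> bool" where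
  "direct_prod_edges EG EH p q \<longleftrightarrow> EG (fst p) (fst q) \<and> EH (snd p) (snd q)"

end

theory Submission
  imports Defs
begin

text \<open>Suppose \<open>\<pi>\<close> maps a graph \<open>(V, E)\<close> homomorphically into a cover graph with order \<open>\<le>\<close>.
  Orient every edge \<open>pq\<close> of \<open>E\<close> as \<open>p \<rightarrow> q\<close> when \<open>\<pi> q\<close> covers \<open>\<pi> p\<close>. Along a directed path
  \<open>\<pi>\<close> strictly increases, so the orientation is acyclic; and a directed edge \<open>p \<rightarrow> q\<close> cannot
  be bypassed by a longer directed path, since its image would put an element strictly
  between \<open>\<pi> p\<close> and \<open>\<pi> q\<close>. Hence the edges are exactly the cover relations of the
  reflexive transitive closure of the orientation, and \<open>(V, E)\<close> is a cover graph.
  The projections of \<open>G \<times> H\<close> onto \<open>G\<close> and onto \<open>H\<close> are such homomorphisms.\<close>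

lemma trancl_strict_mono:
  assumes "trans r" and "antisym r"
    and "\<And>p q. (p, q) \<in> S \<Longrightarrow> (f p, f q) \<in> r \<and> f p \<noteq> f q"
    and "(p, q) \<in> S\<^sup>+"
  shows "(f p, f q) \<in> r \<and> f p \<noteq> f q"
proof -
  have "trans (r - Id)"
    using assms(1,2) by (auto simp: trans_def antisym_def)
  then have "trans (inv_image (r - Id) f)"
    by (rule trans_inv_image)
  moreover have "S \<subseteq> inv_image (r - Id) f"
    using assms(3) by auto
  ultimately have "(p, q) \<in> inv_image (r - Id) f"
    using assms(4) trancl_mono trancl_id by metis
  then show ?thesis
    by auto
qed

lemma partial_order_on_Id_on_Un_trancl:
  assumes "S \<subseteq> V \<times> V" and "acyclic S"
  shows "partial_order_on V (Id_on V \<union> S\<^sup>+)"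
proof -
  have "S\<^sup>+ \<subseteq> V \<times> V"
    using assms(1) by (rule trancl_subset_Sigma)
  moreover have "antisym (S\<^sup>+)"
    using assms(2) by (auto simp: antisym_def acyclic_def intro: trancl_trans)
  ultimately show ?thesis
    unfolding partial_order_on_def preorder_on_def refl_on_def trans_def antisym_def
    by (auto intro: trancl_trans)
qed

definition transitively_reduced :: "'a rel \<Rightarrow> bool" where
  "transitively_reduced S \<longleftrightarrow>
     (\<forall>p q z. (p, q) \<in> S \<longrightarrow> (p, z) \<in> S\<^sup>+ \<longrightarrow> (z, q) \<notin> S\<^sup>+)"

lemma covers_Id_on_Un_trancl_iff:
  assumes "S \<subseteq> V \<times> V" and "acyclic S" and "transitively_reduced S"
  shows "covers V (Id_on V \<union> S\<^sup>+) p q \<longleftrightarrow> (p, q) \<in> S"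
proof
  assume cov: "covers V (Id_on V \<union> S\<^sup>+) p q"
  then have "(p, q) \<in> S\<^sup>+"
    unfolding covers_def by auto
  then show "(p, q) \<in> S"
  proof (cases rule: tranclE)
    case (step z)
    have "z \<in> V"
      using step(2) assms(1) by auto
    moreover have "z \<noteq> p" and "z \<noteq> q"
      using step assms(2) by (auto simp: acyclic_def)
    ultimately show ?thesis
      using step cov unfolding covers_def by auto
  qed
next
  assume "(p, q) \<in> S"
  then show "covers V (Id_on V \<union> S\<^sup>+) p q"
    using assms(2,3) unfolding covers_def transitively_reduced_def acyclic_def
    by (auto dest: trancl_trans)
qed

lemma cover_graph_if_hom_to_cover_graph:
  assumes "cover_graph W F"
    and "symp E" and E_in_V: "\<forall>p q. E p q \<longrightarrow> p \<in> V \<and> q \<in> V"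
    and hom: "\<And>p q. E p q \<Longrightarrow> F (\<pi> p) (\<pi> q)" and "\<pi> ` V \<subseteq> W"
  shows "cover_graph V E"
proof -
  obtain r where r: "partial_order_on W r"
    and F_covers: "\<forall>x\<in>W. \<forall>y\<in>W. F x y \<longleftrightarrow> (covers W r x y \<or> covers W r y x)"
    using assms(1) unfolding cover_graph_def by blast
  define S where "S = {(p, q). E p q \<and> covers W r (\<pi> p) (\<pi> q)}"
  have S_V: "S \<subseteq> V \<times> V"
    using E_in_V unfolding S_def by auto
  have r_trans: "trans r" and r_antisym: "antisym r"
    using r unfolding partial_order_on_def preorder_on_def by auto
  have S_strict: "(\<pi> p, \<pi> q) \<in> r \<and> \<pi> p \<noteq> \<pi> q" if "(p, q) \<in> S\<^sup>+" for p q
    by (rule trancl_strict_mono[OF r_trans r_antisym _ that]) (auto simp: S_def covers_def)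
  have acyclic: "acyclic S"
    using S_strict unfolding acyclic_def by blast
  have reduced: "transitively_reduced S"
    unfolding transitively_reduced_def
  proof (intro allI impI notI)
    fix p q z
    assume pq: "(p, q) \<in> S" and pz: "(p, z) \<in> S\<^sup>+" and zq: "(z, q) \<in> S\<^sup>+"
    have "\<pi> z \<in> W"
      using pz trancl_subset_Sigma[OF S_V] assms(5) by auto
    moreover have "covers W r (\<pi> p) (\<pi> q)"
      using pq by (simp add: S_def)
    ultimately show False
      using S_strict[OF pz] S_strict[OF zq] unfolding covers_def by auto
  qed
  have E_iff: "E p q \<longleftrightarrow> (p, q) \<in> S \<or> (q, p) \<in> S" if "p \<in> V" "q \<in> V" for p q
  proof
    assume "E p q"
    moreover have "\<pi> p \<in> W" "\<pi> q \<in> W"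
      using that assms(5) by auto
    ultimately have "covers W r (\<pi> p) (\<pi> q) \<or> covers W r (\<pi> q) (\<pi> p)"
      using hom F_covers by blast
    then show "(p, q) \<in> S \<or> (q, p) \<in> S"
      using \<open>E p q\<close> sympD[OF assms(2) \<open>E p q\<close>] unfolding S_def by auto
  next
    assume "(p, q) \<in> S \<or> (q, p) \<in> S"
    then show "E p q"
      using sympD[OF assms(2)] unfolding S_def by auto
  qed
  have "partial_order_on V (Id_on V \<union> S\<^sup>+)"
    using S_V acyclic by (rule partial_order_on_Id_on_Un_trancl)
  moreover have "\<forall>x\<in>V. \<forall>y\<in>V. E x y \<longleftrightarrow>
      (covers V (Id_on V \<union> S\<^sup>+) x y \<or> covers V (Id_on V \<union> S\<^sup>+) y x)"
    using E_iff covers_Id_on_Un_trancl_iff[OF S_V acyclic reduced] by simp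
  ultimately show ?thesis
    unfolding cover_graph_def by blast
qed

lemma direct_prod_edges_symp:
  assumes "symp EG" and "symp EH"
  shows "symp (direct_prod_edges EG EH)"
  using assms unfolding direct_prod_edges_def by (auto intro: sympI dest: sympD)

lemma finite_simple_graph_symp:
  assumes "finite_simple_graph V E"
  shows "symp E"
  using assms unfolding finite_simple_graph_def by (auto intro: sympI)

theorem theorem4:
  fixes VG :: "'a set" and EG :: "'a \<Rightarrow> 'a \<Rightarrow> bool"
    and VH :: "'b set" and EH :: "'b \<Rightarrow> 'b \<Rightarrow> bool"
  assumes "finite_simple_graph VG EG" and "finite_simple_graph VH EH"
    and "cover_graph VG EG \<or> cover_graph VH EH"
  shows "cover_graph (VG \<times> VH) (direct_prod_edges EG EH)"
proof -
  have symp: "symp (direct_prod_edges EG EH)"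
    using assms(1,2) by (intro direct_prod_edges_symp finite_simple_graph_symp)
  have in_vertices: "\<forall>p q. direct_prod_edges EG EH p q \<longrightarrow> p \<in> VG \<times> VH \<and> q \<in> VG \<times> VH"
    using assms(1,2) unfolding finite_simple_graph_def direct_prod_edges_def mem_Times_iff
    by blast
  from assms(3) show ?thesis
  proof
    assume "cover_graph VG EG"
    then show ?thesis
      using symp in_vertices
      by (rule cover_graph_if_hom_to_cover_graph[where \<pi> = fst])
         (auto simp: direct_prod_edges_def)
  next
    assume "cover_graph VH EH"
    then show ?thesis
      using symp in_vertices
      by (rule cover_graph_if_hom_to_cover_graph[where \<pi> = snd])
         (auto simp: direct_prod_edges_def)
  qed
qed

end
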